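(* Let $A,B$ be nonzero finite-dimensional $K$-subspaces of $L$. Then there exist nonzero finite-dimensional $K$-subspaces $E,F$ of $L$ such that: (1) $\langle EF\rangle\subset\langle AB\rangle$; (2) $\dim_KE+\dim_KF\geq\dim_KA+\dim_KB$; (3) $ED=E$ and $DF=F$, where $D=E_*^{-1}E\cap FF_*^{-1}$.
   Context: $K$ is a commutative field and $L$ is a (possibly noncommutative) division ring containing $K$ in its center. For $S\subset L$, $\langle S\rangle$ denotes the $K$-subspace of $L$ spanned by $S$. For subsets $S_1,S_2,\dots$ of $L$, $S_1S_2=\{s_1s_2\mid s_1\in S_1,s_2\in S_2\}$ (product set), and similarly for more factors. For $X\subset L$, $X_*=X\setminus\{0\}$ and $X_*^{-1}=\{x^{-1}\mid x\in X_*\}$. *)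

theory Defs
  imports Complex_Main
begin

text \<open>The commutative field K is a type of class field; it is embedded into the
  division ring L (a type of class division_ring) by a unital ring homomorphism
  phi whose image lies in the centre of L.\<close>

definition central_hom :: "('k::field \<Rightarrow> 'l::division_ring) \<Rightarrow> bool" where
  "central_hom \<phi> \<longleftrightarrow> \<phi> 1 = 1 \<and> (\<forall>a b. \<phi> (a + b) = \<phi> a + \<phi> b)
     \<and> (\<forall>a b. \<phi> (a * b) = \<phi> a * \<phi> b) \<and> (\<forall>c x. \<phi> c * x = x * \<phi> c)"

definition kscale :: "('k::field \<Rightarrow> 'l::division_ring) \<Rightarrow> 'k \<Rightarrow> 'l \<Rightarrow> 'l" where
  "kscale \<phi> c x = \<phi> c * x"

abbreviation kspan :: "('k::field \<Rightarrow> 'l::division_ring) \<Rightarrow> 'l set \<Rightarrow> 'l set" where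
  "kspan \<phi> S \<equiv> module.span (kscale \<phi>) S"

abbreviation kdim :: "('k::field \<Rightarrow> 'l::division_ring) \<Rightarrow> 'l set \<Rightarrow> nat" where
  "kdim \<phi> S \<equiv> vector_space.dim (kscale \<phi>) S"

definition fd_subspace :: "('k::field \<Rightarrow> 'l::division_ring) \<Rightarrow> 'l set \<Rightarrow> bool" where
  "fd_subspace \<phi> V \<longleftrightarrow> module.subspace (kscale \<phi>) V \<and> (\<exists>B. finite B \<and> V = kspan \<phi> B)"

definition setmul :: "'l::times set \<Rightarrow> 'l set \<Rightarrow> 'l set" where
  "setmul S T = {s * t | s t. s \<in> S \<and> t \<in> T}"

text \<open>X_*^{-1} = {x^{-1} | x in X, x ~= 0}.\<close>
definition invs :: "'l::division_ring set \<Rightarrow> 'l set" where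
  "invs X = inverse ` (X - {0})"

end

theory Submission
  imports Defs
begin

(*
  Call a pair (E, F) of
  nonzero finite-dimensional subspaces admissible if <E F> is contained in <A B> and
  dim E + dim F >= dim A + dim B; the pair (A, B) itself is admissible.  For nonzero
  e in E and f in F the spaces E f and e F lie in <A B>, so admissible pairs have
  bounded dimensions and there is an admissible pair maximising dim E + dim F and,
  secondarily, dim E.  For such a pair and 0 <> g in D we compare (E, F) with
  (E + E g, F \<inter> g^-1 F) and (E \<inter> E g, F + g^-1 F): their product sets stay inside
  <E F>, and by Grassmann's inequality their total dimensions add up to at least
  2 (dim E + dim F).  Maximality then forces E g <= E and g F <= F, and as 1 is in D
  this gives E D = E and D F = F.
*)

definition fin_subspace :: "('a::field \<Rightarrow> 'b::ab_group_add \<Rightarrow> 'b) \<Rightarrow> 'b set \<Rightarrow> bool" where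
  "fin_subspace s U \<longleftrightarrow> module.subspace s U \<and> (\<exists>B. finite B \<and> U = module.span s B)"

context vector_space
begin

lemma fin_subspace_basis:
  fixes U :: "'b set"
  assumes "fin_subspace scale U"
  obtains B where "finite B" "B \<subseteq> U" "independent B" "span B = U" "card B = dim U"
proof -
  from assms obtain T where T: "finite T" "U = span T" and sU: "subspace U"
    unfolding fin_subspace_def by auto
  obtain B where B: "B \<subseteq> U" "independent B" "U \<subseteq> span B" "card B = dim U"
    by (rule basis_exists)
  have "finite B" using independent_span_bound[OF T(1) B(2)] B(1) T(2) by auto
  moreover have "span B = U" using B span_minimal[OF B(1) sU] by auto
  ultimately show ?thesis using that B by auto
qed

lemma nonzero_element:
  fixes U :: "'b set"
  assumes "fin_subspace scale U" "U \<noteq> {0}"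
  obtains u where "u \<in> U" "u \<noteq> 0"
  using assms subspace_0 unfolding fin_subspace_def by blast

lemma fin_subspace_independent_bound:
  assumes "fin_subspace scale W" "independent S" "S \<subseteq> W"
  shows "finite S" "card S \<le> dim W"
proof -
  obtain C where "finite C" "span C = W" "card C = dim W"
    using fin_subspace_basis[OF assms(1)] by metis
  then show "finite S" "card S \<le> dim W"
    using independent_span_bound[OF _ assms(2), of C] assms(3) by auto
qed

lemma fin_subspace_subspace:
  assumes "fin_subspace scale W" "subspace U" "U \<subseteq> W"
  shows "fin_subspace scale U"
proof -
  obtain B where B: "B \<subseteq> U" "independent B" "U \<subseteq> span B"
    by (rule basis_exists)
  have "finite B" using fin_subspace_independent_bound[OF assms(1) B(2)] B(1) assms(3) by auto
  moreover have "span B = U" using B span_minimal[OF B(1) assms(2)] by auto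
  ultimately show ?thesis unfolding fin_subspace_def using assms(2) by auto
qed

lemma fin_subspace_dim_le:
  assumes "fin_subspace scale W" "U \<subseteq> W"
  shows "dim U \<le> dim W"
proof -
  obtain C where "finite C" "span C = W" "card C = dim W"
    using fin_subspace_basis[OF assms(1)] by metis
  then show ?thesis using dim_le_card[of U C] assms(2) by auto
qed

lemma fin_subspace_eq_if_dim_le:
  assumes "fin_subspace scale W" "subspace U" "U \<subseteq> W" "dim W \<le> dim U"
  shows "U = W"
proof (rule ccontr)
  assume "U \<noteq> W"
  then obtain w where w: "w \<in> W" "w \<notin> U" using assms(3) by auto
  obtain B where B: "finite B" "B \<subseteq> U" "independent B" "span B = U" "card B = dim U"
    using fin_subspace_basis[OF fin_subspace_subspace[OF assms(1-3)]] by blast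
  have "w \<notin> B" using B(2) w(2) by auto
  have "independent (insert w B)" using B w by (simp add: independent_insert)
  then have "card (insert w B) \<le> dim W"
    using fin_subspace_independent_bound[OF assms(1)] B(2) w(1) assms(3) by auto
  with \<open>w \<notin> B\<close> B(1,5) assms(4) show False by simp
qed

lemma fin_subspace_span_Un:
  assumes "fin_subspace scale U" "fin_subspace scale W"
  shows "fin_subspace scale (span (U \<union> W))"
proof -
  obtain BU where BU: "finite BU" "span BU = U" using fin_subspace_basis[OF assms(1)] by metis
  obtain BW where BW: "finite BW" "span BW = W" using fin_subspace_basis[OF assms(2)] by metis
  have "span U = U" "span W = W" using BU(2) BW(2) span_span by blast+
  then have "span (U \<union> W) = span (BU \<union> BW)"
    by (simp only: span_Un BU(2) BW(2))
  then show ?thesis unfolding fin_subspace_def using BU BW by blast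
qed

text \<open>Grassmann's inequality.  Extend a basis C of U \<inter> W to a basis of U and that to a
  basis T of U + W; the new vectors Q lie in W, and C \<union> Q spans W.\<close>

lemma grassmann_le:
  assumes fU: "fin_subspace scale U" and fW: "fin_subspace scale W"
  shows "dim U + dim W \<le> dim (span (U \<union> W)) + dim (U \<inter> W)"
proof -
  have sU: "subspace U" and sW: "subspace W" using fU fW unfolding fin_subspace_def by auto
  have fUW: "fin_subspace scale (span (U \<union> W))" by (rule fin_subspace_span_Un[OF fU fW])
  obtain C where C: "finite C" "C \<subseteq> U \<inter> W" "independent C" "span C = U \<inter> W"
      "card C = dim (U \<inter> W)"
    using fin_subspace_basis[OF fin_subspace_subspace[OF fU subspace_inter[OF sU sW]]] by blast
  obtain BU where BU: "C \<subseteq> BU" "BU \<subseteq> U" "independent BU" "U \<subseteq> span BU"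
    using maximal_independent_subset_extend[of C U] C by auto
  obtain T where T: "BU \<subseteq> T" "T \<subseteq> U \<union> W" "independent T" "U \<union> W \<subseteq> span T"
    using maximal_independent_subset_extend[of BU "U \<union> W"] BU by auto
  define Q where "Q = T - BU"
  have fT: "finite T" and cT: "card T \<le> dim (span (U \<union> W))"
    using fin_subspace_independent_bound[OF fUW T(3)] T(2) span_superset[of "U \<union> W"] by auto
  have spBU: "span BU = U" using BU span_minimal[OF BU(2) sU] by auto
  have QW: "Q \<subseteq> W"
  proof
    fix q assume q: "q \<in> Q"
    have "q \<notin> span (T - {q})" using T(3) q unfolding Q_def by (auto simp: dependent_def)
    moreover have "span BU \<subseteq> span (T - {q})" using T(1) q unfolding Q_def by (intro span_mono) auto
    ultimately show "q \<in> W" using q T(2) spBU unfolding Q_def by auto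
  qed
  have "W \<subseteq> span (C \<union> Q)"
  proof
    fix w assume w: "w \<in> W"
    have "T = BU \<union> Q" using T(1) unfolding Q_def by auto
    then obtain u t where ut: "w = u + t" "u \<in> U" "t \<in> span Q"
      using w T(4) spBU by (auto simp: span_Un)
    have "t \<in> W" using ut(3) span_minimal[OF QW sW] by auto
    then have "u \<in> span C"
      using ut w C(4) subspace_diff[OF sW w] by (metis add_diff_cancel_right' IntI)
    then show "w \<in> span (C \<union> Q)"
      using ut span_mono[of C "C \<union> Q"] span_mono[of Q "C \<union> Q"] span_add by blast
  qed
  then have "dim W \<le> card (C \<union> Q)" using C(1) fT dim_le_card unfolding Q_def by auto
  also have "\<dots> \<le> card C + card Q" by (rule card_Un_le)
  finally have "dim W \<le> card C + card Q" .
  moreover have "card T = card BU + card Q"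
    using card_Un_disjoint[of BU Q] fT T(1) unfolding Q_def
    by (metis Diff_partition finite_Diff Diff_disjoint finite_subset)
  moreover have "card BU = dim U" using basis_card_eq_dim BU by auto
  ultimately show ?thesis using cT C(5) by linarith
qed

lemma linear_image_fin_subspace:
  assumes lin: "Vector_Spaces.linear scale scale f" and inj: "inj f" and fU: "fin_subspace scale U"
  shows "fin_subspace scale (f ` U)" "dim (f ` U) = dim U"
proof -
  interpret L: Vector_Spaces.linear scale scale f by (rule lin)
  obtain B where B: "finite B" "B \<subseteq> U" "independent B" "span B = U" "card B = dim U"
    using fin_subspace_basis[OF fU] by blast
  have img: "f ` U = span (f ` B)" using L.span_image B(4) by simp
  then show "fin_subspace scale (f ` U)" unfolding fin_subspace_def using B(1) by auto
  have "independent (f ` B)" using L.independent_inj_image[OF B(3) inj] .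
  then have "dim (f ` U) = card (f ` B)" using img dim_span_eq_card_independent by simp
  also have "\<dots> = dim U" using B(5) card_image inj inj_on_subset by (metis subset_UNIV)
  finally show "dim (f ` U) = dim U" .
qed

end

lemma inj_mult_right:
  fixes g :: "'a::division_ring"
  assumes "g \<noteq> 0" shows "inj (\<lambda>x. x * g)"
  using assms by (auto intro: injI)

lemma inj_mult_left:
  fixes g :: "'a::division_ring"
  assumes "g \<noteq> 0" shows "inj (\<lambda>x. g * x)"
  using assms by (auto intro: injI)

lemma setmul_eq_right_if_closed:
  fixes E D :: "'a::semiring_1 set"
  assumes "0 \<in> E" "1 \<in> D" "\<And>x g. x \<in> E \<Longrightarrow> g \<in> D \<Longrightarrow> g \<noteq> 0 \<Longrightarrow> x * g \<in> E"
  shows "setmul E D = E"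
proof
  show "setmul E D \<subseteq> E" unfolding setmul_def using assms(1,3) by fastforce
  show "E \<subseteq> setmul E D" unfolding setmul_def using assms(2) by force
qed

lemma setmul_eq_left_if_closed:
  fixes D F :: "'a::semiring_1 set"
  assumes "0 \<in> F" "1 \<in> D" "\<And>y g. y \<in> F \<Longrightarrow> g \<in> D \<Longrightarrow> g \<noteq> 0 \<Longrightarrow> g * y \<in> F"
  shows "setmul D F = F"
proof
  show "setmul D F \<subseteq> F" unfolding setmul_def using assms(1,3) by fastforce
  show "F \<subseteq> setmul D F" unfolding setmul_def using assms(2) by force
qed

lemma one_in_setmul_invs:
  fixes E :: "'a::division_ring set"
  assumes "e \<in> E" "e \<noteq> 0"
  shows "1 \<in> setmul (invs E) E" "1 \<in> setmul E (invs E)"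
proof -
  have "inverse e \<in> invs E" unfolding invs_def using assms by blast
  then show "1 \<in> setmul (invs E) E" "1 \<in> setmul E (invs E)"
    unfolding setmul_def using assms by (force, force)
qed

lemma setmul_invs_left_witness:
  fixes E :: "'a::division_ring set"
  assumes "g \<in> setmul (invs E) E"
  obtains e where "e \<in> E" "e \<noteq> 0" "e * g \<in> E"
proof -
  obtain e e' where "e \<in> E" "e \<noteq> 0" "e' \<in> E" "g = inverse e * e'"
    using assms unfolding setmul_def invs_def by auto
  then show ?thesis using that by (simp add: mult.assoc[symmetric])
qed

lemma setmul_invs_right_witness:
  fixes F :: "'a::division_ring set"
  assumes "g \<in> setmul F (invs F)"
  obtains f where "f \<in> F" "f \<noteq> 0" "g * f \<in> F"
proof -
  obtain f f' where "f \<in> F" "f \<noteq> 0" "f' \<in> F" "g = f' * inverse f"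
    using assms unfolding setmul_def invs_def by auto
  then show ?thesis using that by (simp add: mult.assoc)
qed

locale central_embedding =
  fixes \<phi> :: "'k::field \<Rightarrow> 'l::division_ring"
  assumes central: "central_hom \<phi>"
begin

lemma phi_add: "\<phi> (a + b) = \<phi> a + \<phi> b" and phi_mult: "\<phi> (a * b) = \<phi> a * \<phi> b"
  and phi_one: "\<phi> 1 = 1" and phi_commute: "\<phi> c * x = x * \<phi> c"
  using central unfolding central_hom_def by blast+

sublocale V: vector_space "kscale \<phi>"
  unfolding vector_space_def kscale_def
  by (simp add: distrib_left distrib_right phi_add phi_mult phi_one mult.assoc)

text \<open>Left and right multiplications are K-linear, as \<phi> K is central.\<close>

lemma linear_mult_right: "Vector_Spaces.linear (kscale \<phi>) (kscale \<phi>) (\<lambda>x. x * g)"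
  unfolding Vector_Spaces.linear_iff using V.vector_space_axioms
  by (simp add: kscale_def distrib_right mult.assoc)

lemma linear_mult_left: "Vector_Spaces.linear (kscale \<phi>) (kscale \<phi>) (\<lambda>x. g * x)"
proof -
  have "\<phi> c * (g * x) = g * (\<phi> c * x)" for c x
    by (metis mult.assoc phi_commute)
  then show ?thesis unfolding Vector_Spaces.linear_iff using V.vector_space_axioms
    by (simp add: kscale_def distrib_left)
qed

lemma setmul_span_subset: "setmul (V.span X) (V.span Y) \<subseteq> V.span (setmul X Y)"
proof
  fix z assume "z \<in> setmul (V.span X) (V.span Y)"
  then obtain x y where z: "z = x * y" "x \<in> V.span X" "y \<in> V.span Y" unfolding setmul_def by auto
  interpret R: Vector_Spaces.linear "kscale \<phi>" "kscale \<phi>" "\<lambda>a. a * y" by (rule linear_mult_right)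
  have "a * y \<in> V.span (setmul X Y)" if a: "a \<in> X" for a
  proof -
    interpret La: Vector_Spaces.linear "kscale \<phi>" "kscale \<phi>" "\<lambda>b. a * b" by (rule linear_mult_left)
    have "(\<lambda>b. a * b) ` Y \<subseteq> setmul X Y" using a unfolding setmul_def by blast
    then have "V.span ((\<lambda>b. a * b) ` Y) \<subseteq> V.span (setmul X Y)" by (rule V.span_mono)
    then show ?thesis using z(3) La.span_image by blast
  qed
  then have "V.span ((\<lambda>a. a * y) ` X) \<subseteq> V.span (setmul X Y)"
    by (intro V.span_minimal) auto
  then show "z \<in> V.span (setmul X Y)" using z(1,2) R.span_image by blast
qed

lemma span_setmul_span: "V.span (setmul (V.span X) (V.span Y)) = V.span (setmul X Y)"
proof
  show "V.span (setmul (V.span X) (V.span Y)) \<subseteq> V.span (setmul X Y)"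
    using V.span_minimal[OF setmul_span_subset] by blast
  have "setmul X Y \<subseteq> setmul (V.span X) (V.span Y)"
    using V.span_superset unfolding setmul_def by blast
  then show "V.span (setmul X Y) \<subseteq> V.span (setmul (V.span X) (V.span Y))" by (rule V.span_mono)
qed

lemma fin_span_setmul:
  assumes "fin_subspace (kscale \<phi>) U" "fin_subspace (kscale \<phi>) W"
  shows "fin_subspace (kscale \<phi>) (V.span (setmul U W))"
proof -
  obtain BU where BU: "finite BU" "V.span BU = U" using V.fin_subspace_basis[OF assms(1)] by metis
  obtain BW where BW: "finite BW" "V.span BW = W" using V.fin_subspace_basis[OF assms(2)] by metis
  have "setmul BU BW = (\<lambda>(a, b). a * b) ` (BU \<times> BW)" unfolding setmul_def by auto
  then have "finite (setmul BU BW)" using BU BW by simp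
  moreover have "V.span (setmul U W) = V.span (setmul BU BW)"
    using span_setmul_span[of BU BW] BU BW by simp
  ultimately show ?thesis unfolding fin_subspace_def by auto
qed

lemma subspace_mult_left:
  assumes "V.subspace F" shows "V.subspace ((\<lambda>y. g * y) ` F)"
proof -
  interpret Vector_Spaces.linear "kscale \<phi>" "kscale \<phi>" "\<lambda>y. g * y" by (rule linear_mult_left)
  show ?thesis by (rule subspace_image[OF assms])
qed

lemma subspace_mult_right:
  assumes "V.subspace E" shows "V.subspace ((\<lambda>x. x * g) ` E)"
proof -
  interpret Vector_Spaces.linear "kscale \<phi>" "kscale \<phi>" "\<lambda>x. x * g" by (rule linear_mult_right)
  show ?thesis by (rule subspace_image[OF assms])
qed

lemma shifted_products:
  assumes sE: "V.subspace E" and sF: "V.subspace F" and g: "g \<noteq> 0"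
  defines "Eg \<equiv> (\<lambda>x. x * g) ` E" and "Fg \<equiv> (\<lambda>y. inverse g * y) ` F"
  shows "V.span (setmul (V.span (E \<union> Eg)) (F \<inter> Fg)) \<subseteq> V.span (setmul E F)"
    and "V.span (setmul (E \<inter> Eg) (V.span (F \<union> Fg))) \<subseteq> V.span (setmul E F)"
proof -
  have cancel: "(v * g) * (inverse g * w) = v * w" for v w
    using g by (simp add: mult.assoc[symmetric]) (simp add: mult.assoc)
  have sFg: "V.subspace Fg" and sEg: "V.subspace Eg"
    unfolding Fg_def Eg_def using subspace_mult_left[OF sF] subspace_mult_right[OF sE] by auto
  have spF1: "V.span (F \<inter> Fg) = F \<inter> Fg" and spE2: "V.span (E \<inter> Eg) = E \<inter> Eg"
    using V.subspace_inter[OF sF sFg] V.subspace_inter[OF sE sEg] by auto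
  have "setmul (E \<union> Eg) (F \<inter> Fg) \<subseteq> setmul E F"
    unfolding setmul_def Eg_def Fg_def using cancel by fastforce
  then show "V.span (setmul (V.span (E \<union> Eg)) (F \<inter> Fg)) \<subseteq> V.span (setmul E F)"
    using span_setmul_span[of "E \<union> Eg" "F \<inter> Fg"] spF1 V.span_mono by metis
  have "setmul (E \<inter> Eg) (F \<union> Fg) \<subseteq> setmul E F"
    unfolding setmul_def Eg_def Fg_def using cancel by fastforce
  then show "V.span (setmul (E \<inter> Eg) (V.span (F \<union> Fg))) \<subseteq> V.span (setmul E F)"
    using span_setmul_span[of "E \<inter> Eg" "F \<union> Fg"] spE2 V.span_mono by metis
qed

end

locale product_pair = central_embedding \<phi> for \<phi> :: "'k::field \<Rightarrow> 'l::division_ring" +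
  fixes A B :: "'l set"
  assumes fin_A: "fin_subspace (kscale \<phi>) A" and A_nonzero: "A \<noteq> {0}"
    and fin_B: "fin_subspace (kscale \<phi>) B" and B_nonzero: "B \<noteq> {0}"
begin

definition admissible :: "'l set \<Rightarrow> 'l set \<Rightarrow> bool" where
  "admissible E F \<longleftrightarrow> fin_subspace (kscale \<phi>) E \<and> E \<noteq> {0}
     \<and> fin_subspace (kscale \<phi>) F \<and> F \<noteq> {0}
     \<and> V.span (setmul E F) \<subseteq> V.span (setmul A B)
     \<and> V.dim A + V.dim B \<le> V.dim E + V.dim F"

text \<open>Admissible pairs have bounded dimensions, since E f and e F embed into <A B>.\<close>

lemma admissible_dim_bound:
  assumes "admissible E F"
  shows "V.dim E + V.dim F \<le> 2 * V.dim (V.span (setmul A B))"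
proof -
  let ?AB = "V.span (setmul A B)"
  have fE: "fin_subspace (kscale \<phi>) E" and fF: "fin_subspace (kscale \<phi>) F"
    and EF: "V.span (setmul E F) \<subseteq> ?AB"
    using assms unfolding admissible_def by auto
  obtain e where e: "e \<in> E" "e \<noteq> 0" using assms V.nonzero_element unfolding admissible_def by metis
  obtain f where f: "f \<in> F" "f \<noteq> 0" using assms V.nonzero_element unfolding admissible_def by metis
  have fAB: "fin_subspace (kscale \<phi>) ?AB" by (rule fin_span_setmul[OF fin_A fin_B])
  have "(\<lambda>x. x * f) ` E \<subseteq> ?AB" and "(\<lambda>y. e * y) ` F \<subseteq> ?AB"
    using e f EF V.span_superset[of "setmul E F"] unfolding setmul_def by blast+
  then have "V.dim ((\<lambda>x. x * f) ` E) \<le> V.dim ?AB" and "V.dim ((\<lambda>y. e * y) ` F) \<le> V.dim ?AB"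
    using V.fin_subspace_dim_le[OF fAB] by auto
  moreover have "V.dim ((\<lambda>x. x * f) ` E) = V.dim E"
    using V.linear_image_fin_subspace[OF linear_mult_right inj_mult_right[OF f(2)] fE] by simp
  moreover have "V.dim ((\<lambda>y. e * y) ` F) = V.dim F"
    using V.linear_image_fin_subspace[OF linear_mult_left inj_mult_left[OF e(2)] fF] by simp
  ultimately show ?thesis by simp
qed

definition maximal_admissible :: "'l set \<Rightarrow> 'l set \<Rightarrow> bool" where
  "maximal_admissible E F \<longleftrightarrow> admissible E F \<and> (\<forall>E' F'. admissible E' F' \<longrightarrow>
     V.dim E' + V.dim F' \<le> V.dim E + V.dim F
     \<and> (V.dim E' + V.dim F' = V.dim E + V.dim F \<longrightarrow> V.dim E' \<le> V.dim E))"

text \<open>Maximal pairs exist: (A, B) is admissible and, by the dimension bound, both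
  maximisations range over finitely many values.\<close>

lemma exists_maximal_admissible: "\<exists>E F. maximal_admissible E F"
proof -
  define N where "N = Suc (2 * V.dim (V.span (setmul A B)))"
  define total where "total = (\<lambda>(E, F). V.dim E + V.dim F)"
  have bound: "total q < N" if "case_prod admissible q" for q
    using that admissible_dim_bound unfolding N_def total_def by (cases q) fastforce
  have "admissible A B" unfolding admissible_def using fin_A A_nonzero fin_B B_nonzero by auto
  then obtain p where p: "case_prod admissible p" "\<And>q. case_prod admissible q \<Longrightarrow> total q \<le> total p"
    using ex_has_greatest_nat[of "case_prod admissible" "(A, B)" total N] bound by auto
  define P where "P = (\<lambda>q. case_prod admissible q \<and> total q = total p)"
  have "V.dim (fst q) < N" if "P q" for q
    using bound[of q] that unfolding P_def total_def by (cases q) auto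
  moreover have "P p" unfolding P_def using p(1) by simp
  ultimately obtain r where r: "P r" "\<And>q. P q \<Longrightarrow> V.dim (fst q) \<le> V.dim (fst r)"
    using ex_has_greatest_nat[of P p "\<lambda>q. V.dim (fst q)" N] by blast
  obtain E F where EF: "r = (E, F)" by (cases r)
  have "maximal_admissible E F"
    unfolding maximal_admissible_def
    using r EF p(2) unfolding P_def total_def by fastforce
  then show ?thesis by blast
qed

text \<open>The pairs (E + E g, F \<inter> g\<inverse> F) and (E \<inter> E g, F + g\<inverse> F) consist of nonzero
  finite-dimensional subspaces whose product sets stay inside <E F>, so each of them is
  admissible as soon as its total dimension is large enough; by Grassmann's inequality
  their total dimensions add up to at least 2 (dim E + dim F).\<close>

lemma exchanged_pairs:
  assumes adm: "admissible E F"
    and g: "g \<noteq> 0" and e: "e \<in> E" "e \<noteq> 0" "e * g \<in> E" and f: "f \<in> F" "f \<noteq> 0" "g * f \<in> F"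
  defines "Eg \<equiv> (\<lambda>x. x * g) ` E" and "Fg \<equiv> (\<lambda>y. inverse g * y) ` F"
  shows "2 * (V.dim E + V.dim F) \<le> (V.dim (V.span (E \<union> Eg)) + V.dim (F \<inter> Fg))
      + (V.dim (E \<inter> Eg) + V.dim (V.span (F \<union> Fg)))"
    and "V.dim E + V.dim F \<le> V.dim (V.span (E \<union> Eg)) + V.dim (F \<inter> Fg)
      \<Longrightarrow> admissible (V.span (E \<union> Eg)) (F \<inter> Fg)"
    and "V.dim E + V.dim F \<le> V.dim (E \<inter> Eg) + V.dim (V.span (F \<union> Fg))
      \<Longrightarrow> admissible (E \<inter> Eg) (V.span (F \<union> Fg))"
proof -
  have fE: "fin_subspace (kscale \<phi>) E" and fF: "fin_subspace (kscale \<phi>) F"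
    and EF: "V.span (setmul E F) \<subseteq> V.span (setmul A B)"
    and dim_EF: "V.dim A + V.dim B \<le> V.dim E + V.dim F"
    using adm unfolding admissible_def by auto
  have sE: "V.subspace E" and sF: "V.subspace F" using fE fF unfolding fin_subspace_def by auto
  have fEg: "fin_subspace (kscale \<phi>) Eg" and dim_Eg: "V.dim Eg = V.dim E"
    unfolding Eg_def using V.linear_image_fin_subspace[OF linear_mult_right inj_mult_right[OF g] fE]
    by auto
  have fFg: "fin_subspace (kscale \<phi>) Fg" and dim_Fg: "V.dim Fg = V.dim F"
    unfolding Fg_def using g V.linear_image_fin_subspace[OF linear_mult_left inj_mult_left fF] by auto
  have sEg: "V.subspace Eg" and sFg: "V.subspace Fg" using fEg fFg unfolding fin_subspace_def by auto
  have "f \<in> F \<inter> Fg" unfolding Fg_def using f g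
    by (auto intro!: image_eqI[of f _ "g * f"] simp: mult.assoc[symmetric])
  moreover have "e * g \<in> E \<inter> Eg" "e * g \<noteq> 0" unfolding Eg_def using e g by auto
  moreover have "E \<subseteq> V.span (E \<union> Eg)" "F \<subseteq> V.span (F \<union> Fg)" using V.span_superset by blast+
  ultimately have nonzero: "V.span (E \<union> Eg) \<noteq> {0}" "F \<inter> Fg \<noteq> {0}"
      "E \<inter> Eg \<noteq> {0}" "V.span (F \<union> Fg) \<noteq> {0}"
    using e f by blast+
  have fin: "fin_subspace (kscale \<phi>) (V.span (E \<union> Eg))" "fin_subspace (kscale \<phi>) (F \<inter> Fg)"
      "fin_subspace (kscale \<phi>) (E \<inter> Eg)" "fin_subspace (kscale \<phi>) (V.span (F \<union> Fg))"
    using V.fin_subspace_span_Un[OF fE fEg] V.fin_subspace_span_Un[OF fF fFg]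
      V.fin_subspace_subspace[OF fF V.subspace_inter[OF sF sFg]]
      V.fin_subspace_subspace[OF fE V.subspace_inter[OF sE sEg]] by auto
  have products: "V.span (setmul (V.span (E \<union> Eg)) (F \<inter> Fg)) \<subseteq> V.span (setmul A B)"
      "V.span (setmul (E \<inter> Eg) (V.span (F \<union> Fg))) \<subseteq> V.span (setmul A B)"
    unfolding Eg_def Fg_def using shifted_products[OF sE sF g] EF by auto
  show "2 * (V.dim E + V.dim F) \<le> (V.dim (V.span (E \<union> Eg)) + V.dim (F \<inter> Fg))
      + (V.dim (E \<inter> Eg) + V.dim (V.span (F \<union> Fg)))"
    using V.grassmann_le[OF fE fEg] V.grassmann_le[OF fF fFg] dim_Eg dim_Fg by simp
  show "V.dim E + V.dim F \<le> V.dim (V.span (E \<union> Eg)) + V.dim (F \<inter> Fg)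
      \<Longrightarrow> admissible (V.span (E \<union> Eg)) (F \<inter> Fg)"
    and "V.dim E + V.dim F \<le> V.dim (E \<inter> Eg) + V.dim (V.span (F \<union> Fg))
      \<Longrightarrow> admissible (E \<inter> Eg) (V.span (F \<union> Fg))"
    unfolding admissible_def using fin nonzero products dim_EF by auto
qed

text \<open>The
  second exchanged pair cannot have larger total dimension, so the first one is
  admissible with the same total dimension; maximality of dim E then forces
  E + E g = E and F \<inter> g\<inverse> F = F.\<close>

lemma maximal_pair_stable:
  assumes max: "maximal_admissible E F"
    and g: "g \<noteq> 0" and e: "e \<in> E" "e \<noteq> 0" "e * g \<in> E" and f: "f \<in> F" "f \<noteq> 0" "g * f \<in> F"
  shows "(\<lambda>x. x * g) ` E \<subseteq> E \<and> (\<lambda>y. g * y) ` F \<subseteq> F"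
proof -
  have adm: "admissible E F" using max unfolding maximal_admissible_def by blast
  have max_total: "V.dim E' + V.dim F' \<le> V.dim E + V.dim F" if "admissible E' F'" for E' F'
    using max that unfolding maximal_admissible_def by blast
  have max_first: "V.dim E' \<le> V.dim E"
    if "admissible E' F'" "V.dim E' + V.dim F' = V.dim E + V.dim F" for E' F'
    using max that unfolding maximal_admissible_def by blast
  have fE: "fin_subspace (kscale \<phi>) E" and fF: "fin_subspace (kscale \<phi>) F"
    using adm unfolding admissible_def by auto
  then have sE: "V.subspace E" unfolding fin_subspace_def by auto
  define Eg where "Eg = (\<lambda>x. x * g) ` E"
  define Fg where "Fg = (\<lambda>y. inverse g * y) ` F"
  define E1 where "E1 = V.span (E \<union> Eg)"
  define F1 where "F1 = F \<inter> Fg"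
  note exchange = exchanged_pairs[OF adm g e f, folded Eg_def Fg_def, folded E1_def F1_def]
  have "\<not> V.dim E + V.dim F < V.dim (E \<inter> Eg) + V.dim (V.span (F \<union> Fg))"
    using max_total[OF exchange(3)] by fastforce
  then have total: "V.dim E1 + V.dim F1 = V.dim E + V.dim F"
    using exchange(1) max_total[OF exchange(2)] by fastforce
  have adm1: "admissible E1 F1" using exchange(2) total by simp
  then have fE1: "fin_subspace (kscale \<phi>) E1" and sF1: "V.subspace F1"
    unfolding admissible_def fin_subspace_def by auto
  have E_E1: "E \<subseteq> E1" unfolding E1_def using V.span_superset by blast
  have dim_E1: "V.dim E1 \<le> V.dim E" using max_first[OF adm1 total] .
  then have "E = E1" using V.fin_subspace_eq_if_dim_le[OF fE1 sE E_E1] by simp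
  then have "Eg \<subseteq> E" unfolding E1_def using V.span_superset by blast
  have "F1 = F"
    using V.fin_subspace_eq_if_dim_le[OF fF sF1] total dim_E1 unfolding F1_def by auto
  then have "(\<lambda>y. g * y) ` F \<subseteq> (\<lambda>y. g * y) ` Fg" unfolding F1_def by auto
  also have "\<dots> = F" unfolding Fg_def image_image using g by (simp add: mult.assoc[symmetric])
  finally show ?thesis using \<open>Eg \<subseteq> E\<close> unfolding Eg_def by simp
qed

lemma exists_stable_admissible:
  "\<exists>E F. admissible E F \<and> (let D = setmul (invs E) E \<inter> setmul F (invs F)
     in setmul E D = E \<and> setmul D F = F)"
proof -
  obtain E F where max: "maximal_admissible E F" using exists_maximal_admissible by blast
  then have adm: "admissible E F" unfolding maximal_admissible_def by blast
  define D where "D = setmul (invs E) E \<inter> setmul F (invs F)"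
  have fE: "fin_subspace (kscale \<phi>) E" and fF: "fin_subspace (kscale \<phi>) F"
    using adm unfolding admissible_def by auto
  obtain e where e: "e \<in> E" "e \<noteq> 0" using adm V.nonzero_element unfolding admissible_def by metis
  obtain f where f: "f \<in> F" "f \<noteq> 0" using adm V.nonzero_element unfolding admissible_def by metis
  have one: "1 \<in> D" unfolding D_def using one_in_setmul_invs[OF e] one_in_setmul_invs[OF f] by blast
  have closed: "(\<lambda>x. x * g) ` E \<subseteq> E \<and> (\<lambda>y. g * y) ` F \<subseteq> F"
    if gD: "g \<in> D" and g: "g \<noteq> 0" for g
  proof -
    obtain e' where e': "e' \<in> E" "e' \<noteq> 0" "e' * g \<in> E"
      using gD setmul_invs_left_witness unfolding D_def by blast
    obtain f' where f': "f' \<in> F" "f' \<noteq> 0" "g * f' \<in> F"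
      using gD setmul_invs_right_witness unfolding D_def by blast
    show ?thesis by (rule maximal_pair_stable[OF max g e' f'])
  qed
  have "0 \<in> E" "0 \<in> F" using fE fF V.subspace_0 unfolding fin_subspace_def by auto
  have "setmul E D = E"
    by (rule setmul_eq_right_if_closed[OF \<open>0 \<in> E\<close> one]) (use closed in blast)
  moreover have "setmul D F = F"
    by (rule setmul_eq_left_if_closed[OF \<open>0 \<in> F\<close> one]) (use closed in blast)
  ultimately show ?thesis using adm unfolding D_def Let_def by blast
qed

end

lemma fd_subspace_eq_fin_subspace: "fd_subspace \<phi> = fin_subspace (kscale \<phi>)"
  unfolding fd_subspace_def fin_subspace_def by (simp add: fun_eq_iff)

theorem mainTheorem4:
  fixes \<phi> :: "'k::field \<Rightarrow> 'l::division_ring" and A B :: "'l set"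
  assumes "central_hom \<phi>"
    and "fd_subspace \<phi> A" and "A \<noteq> {0}"
    and "fd_subspace \<phi> B" and "B \<noteq> {0}"
  shows "\<exists>E F. fd_subspace \<phi> E \<and> E \<noteq> {0} \<and> fd_subspace \<phi> F \<and> F \<noteq> {0}
    \<and> kspan \<phi> (setmul E F) \<subseteq> kspan \<phi> (setmul A B)
    \<and> kdim \<phi> E + kdim \<phi> F \<ge> kdim \<phi> A + kdim \<phi> B
    \<and> (let D = setmul (invs E) E \<inter> setmul F (invs F)
       in setmul E D = E \<and> setmul D F = F)"
proof -
  interpret product_pair \<phi> A B
    using assms unfolding fd_subspace_eq_fin_subspace by unfold_locales
  from exists_stable_admissible obtain E F where "admissible E F"
    and "let D = setmul (invs E) E \<inter> setmul F (invs F) in setmul E D = E \<and> setmul D F = F"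
    by blast
  then show ?thesis unfolding admissible_def fd_subspace_eq_fin_subspace by blast
qed

end
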